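(* (a) Let $H$ be the graph obtained from the cycle $C_5$ by attaching one pendant edge. Then $\chi_i(H)=\chi_{i,2}(H)=4$ and $\chi_{i,1}(H)=5$. (b) For every $n\ge 1$, $\chi_{i,1}(K_{n,n})=2n$.
   Context: An incidence of a graph $G$ is a pair $(v,e)$ with $v\in e\in E(G)$; incidences $(v,e),(u,f)$ are adjacent if $v=u$, or $e=f$, or $vu\in\{e,f\}$; an incidence coloring gives adjacent incidences distinct colors; $\chi_i(G)$ is the least number of colors of an incidence coloring. For an incidence coloring $c$, $S^1_c(v)=\{c(u,uv):uv\in E(G)\}$. A $(k,p)$-incidence coloring is an incidence coloring with at most $k$ colors such that $|S^1_c(v)|\le p$ for every vertex $v$; $\chi_{i,p}(G)$ is the least $k$ for which $G$ admits a $(k,p)$-incidence coloring. *)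

theory Defs
  imports Main
begin

text \<open>A simple graph is given by a vertex set V and an edge set E of 2-element subsets of V.
  Colours are natural numbers.\<close>

definition incidences :: "'a set set \<Rightarrow> ('a \<times> 'a set) set" where
  "incidences E = {(v, e). e \<in> E \<and> v \<in> e}"

definition inc_adj :: "('a \<times> 'a set) \<Rightarrow> ('a \<times> 'a set) \<Rightarrow> bool" where
  "inc_adj a b \<longleftrightarrow> (case a of (v, e) \<Rightarrow> case b of (u, f) \<Rightarrow>
      v = u \<or> e = f \<or> {v, u} = e \<or> {v, u} = f)"

definition incidence_coloring :: "'a set set \<Rightarrow> ('a \<times> 'a set \<Rightarrow> nat) \<Rightarrow> bool" where
  "incidence_coloring E c \<longleftrightarrow>
     (\<forall>a\<in>incidences E. \<forall>b\<in>incidences E. a \<noteq> b \<and> inc_adj a b \<longrightarrow> c a \<noteq> c b)"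

definition S1 :: "'a set set \<Rightarrow> ('a \<times> 'a set \<Rightarrow> nat) \<Rightarrow> 'a \<Rightarrow> nat set" where
  "S1 E c v = {c (u, {u, v}) | u. {u, v} \<in> E}"

definition kp_incidence_coloring ::
  "'a set \<Rightarrow> 'a set set \<Rightarrow> nat \<Rightarrow> nat \<Rightarrow> ('a \<times> 'a set \<Rightarrow> nat) \<Rightarrow> bool" where
  "kp_incidence_coloring V E k p c \<longleftrightarrow>
     incidence_coloring E c \<and> card (c ` incidences E) \<le> k \<and> (\<forall>v\<in>V. card (S1 E c v) \<le> p)"

definition chi_i :: "'a set set \<Rightarrow> nat" where
  "chi_i E = (LEAST k. \<exists>c. incidence_coloring E c \<and> card (c ` incidences E) \<le> k)"

definition chi_ip :: "'a set \<Rightarrow> 'a set set \<Rightarrow> nat \<Rightarrow> nat" where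
  "chi_ip V E p = (LEAST k. \<exists>c. kp_incidence_coloring V E k p c)"

definition H_V :: "nat set" where "H_V = {0..5}"
definition H_E :: "nat set set" where
  "H_E = {{i, (i + 1) mod 5} | i. i < 5} \<union> {{0, 5}}"

definition K_V :: "nat \<Rightarrow> nat set" where "K_V n = {0..<2 * n}"
definition K_E :: "nat \<Rightarrow> nat set set" where
  "K_E n = {{i, n + j} | i j. i < n \<and> j < n}"

end

theory Submission
  imports Defs
begin

text \<open>A \<open>(k,1)\<close>-incidence colouring of a graph \<open>G\<close> is the same thing as a proper colouring of its
  square \<open>G\<^sup>2\<close>. Colouring each incidence \<open>(u,uw)\<close> by the colour of \<open>w\<close> is an incidence colouring as
  soon as vertices at distance at most two get different colours; conversely, if every vertex sees a
  single colour on the incidences pointing at it, that colour properly colours \<open>G\<^sup>2\<close>. So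
  \<open>\<chi>\<^sub>i\<^sub>,\<^sub>1(G)\<close> is squeezed between the size of a clique of \<open>G\<^sup>2\<close> and the number of colours of a
  colouring of \<open>G\<^sup>2\<close>. In \<open>K\<^sub>n\<^sub>,\<^sub>n\<close> all vertices are pairwise at distance at most two, giving \<open>2n\<close>; in \<open>H\<close>
  the five cycle vertices are pairwise at distance at most two, while the pendant vertex may share
  its colour with the cycle vertex at distance three, giving \<open>5\<close>. Finally, the vertex of degree three in \<open>H\<close> forces four colours on its
  three outgoing incidences and one incoming one, and an explicit colouring with four colours and
  at most two incoming colours per vertex gives \<open>\<chi>\<^sub>i(H) = \<chi>\<^sub>i\<^sub>,\<^sub>2(H) = 4\<close>.\<close>

definition simple_graph :: "'a set \<Rightarrow> 'a set set \<Rightarrow> bool" where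
  "simple_graph V E \<longleftrightarrow> finite V \<and> (\<forall>e\<in>E. e \<subseteq> V \<and> card e = 2)"

definition other_end :: "'a \<Rightarrow> 'a set \<Rightarrow> 'a" where
  "other_end u e = (THE w. e = {u, w})"

lemma other_end_doubleton [simp]: "other_end u {u, w} = w"
  unfolding other_end_def by (rule the_equality) (auto simp: doubleton_eq_iff)

lemma incidence_memI [intro]: "{u, w} \<in> E \<Longrightarrow> (u, {u, w}) \<in> incidences E"
  unfolding incidences_def by auto

lemma simple_graph_edge_neq: "simple_graph V E \<Longrightarrow> {u, w} \<in> E \<Longrightarrow> u \<noteq> w"
  unfolding simple_graph_def by fastforce

lemma simple_graph_edge_subset: "simple_graph V E \<Longrightarrow> {u, w} \<in> E \<Longrightarrow> u \<in> V \<and> w \<in> V"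
  unfolding simple_graph_def by blast

lemma incidencesE:
  assumes "simple_graph V E" and "a \<in> incidences E"
  obtains u w where "{u, w} \<in> E" "a = (u, {u, w})"
proof -
  obtain v e where ve: "a = (v, e)" "e \<in> E" "v \<in> e"
    using assms(2) unfolding incidences_def by blast
  then obtain x y where "e = {x, y}"
    using assms(1) unfolding simple_graph_def by (metis card_2_iff)
  with ve obtain w where "e = {v, w}" by (auto simp: insert_commute)
  with ve show thesis by (intro that) auto
qed

lemma finite_incidences: "simple_graph V E \<Longrightarrow> finite (incidences E)"
  unfolding simple_graph_def incidences_def
  by (rule finite_subset[of _ "V \<times> Pow V"]) auto

lemma S1_subset_colors: "S1 E c v \<subseteq> c ` incidences E"
  unfolding S1_def by blast

lemma S1_eq_image: "S1 E c v = (\<lambda>u. c (u, {u, v})) ` {u. {u, v} \<in> E}"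
  unfolding S1_def by blast

lemma inc_adj_doubleton:
  "u \<noteq> w \<Longrightarrow> x \<noteq> y \<Longrightarrow> inc_adj (u, {u, w}) (x, {x, y}) \<longleftrightarrow> u = x \<or> w = x \<or> u = y"
  unfolding inc_adj_def by (auto simp: doubleton_eq_iff)

lemma incidence_coloringD:
  "incidence_coloring E c \<Longrightarrow> a \<in> incidences E \<Longrightarrow> b \<in> incidences E \<Longrightarrow> a \<noteq> b \<Longrightarrow> inc_adj a b
    \<Longrightarrow> c a \<noteq> c b"
  unfolding incidence_coloring_def by blast

lemma incidence_coloring_neq:
  assumes "incidence_coloring E c" "simple_graph V E" "{u, w} \<in> E" "{x, y} \<in> E"
    and "(u, w) \<noteq> (x, y)" "u = x \<or> w = x \<or> u = y"
  shows "c (u, {u, w}) \<noteq> c (x, {x, y})"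
proof -
  have uw: "u \<noteq> w" using simple_graph_edge_neq[OF assms(2,3)] .
  have xy: "x \<noteq> y" using simple_graph_edge_neq[OF assms(2,4)] .
  have "(u, {u, w}) \<noteq> (x, {x, y})"
    using assms(5) uw xy by (auto simp: doubleton_eq_iff)
  moreover have "inc_adj (u, {u, w}) (x, {x, y})"
    using assms(6) inc_adj_doubleton[OF uw xy] by blast
  ultimately show ?thesis
    by (rule incidence_coloringD[OF assms(1) incidence_memI[OF assms(3)] incidence_memI[OF assms(4)]])
qed

lemma incidence_coloringI:
  assumes "simple_graph V E"
    and "\<And>u w x y. {u, w} \<in> E \<Longrightarrow> {x, y} \<in> E \<Longrightarrow> (u, w) \<noteq> (x, y) \<Longrightarrow>
           u = x \<or> w = x \<or> u = y \<Longrightarrow> c (u, {u, w}) \<noteq> c (x, {x, y})"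
  shows "incidence_coloring E c"
  unfolding incidence_coloring_def
proof (intro ballI impI)
  fix a b assume a: "a \<in> incidences E" and b: "b \<in> incidences E" and ab: "a \<noteq> b \<and> inc_adj a b"
  obtain u w where uw: "{u, w} \<in> E" "a = (u, {u, w})" using incidencesE[OF assms(1) a] .
  obtain x y where xy: "{x, y} \<in> E" "b = (x, {x, y})" using incidencesE[OF assms(1) b] .
  have "u \<noteq> w" "x \<noteq> y" using uw xy assms(1) by (auto dest: simple_graph_edge_neq)
  with ab uw xy have "(u, w) \<noteq> (x, y)" "u = x \<or> w = x \<or> u = y"
    by (auto simp: inc_adj_doubleton)
  with assms(2) uw xy show "c a \<noteq> c b" by blast
qed

definition dist_le_2 :: "'a set set \<Rightarrow> 'a \<Rightarrow> 'a \<Rightarrow> bool" where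
  "dist_le_2 E w y \<longleftrightarrow> {w, y} \<in> E \<or> (\<exists>u. {u, w} \<in> E \<and> {u, y} \<in> E)"

definition square_coloring :: "'a set set \<Rightarrow> ('a \<Rightarrow> nat) \<Rightarrow> bool" where
  "square_coloring E f \<longleftrightarrow> (\<forall>w y. w \<noteq> y \<and> dist_le_2 E w y \<longrightarrow> f w \<noteq> f y)"

lemma dist_le_2_commute: "dist_le_2 E w y \<longleftrightarrow> dist_le_2 E y w"
  unfolding dist_le_2_def by (auto simp: insert_commute)

lemma incidence_coloring_other_end:
  assumes "simple_graph V E" "square_coloring E f"
  shows "incidence_coloring E (\<lambda>(u, e). f (other_end u e))"
proof (rule incidence_coloringI[OF assms(1)])
  fix u w x y
  assume uw: "{u, w} \<in> E" and xy: "{x, y} \<in> E" and "(u, w) \<noteq> (x, y)"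
    and adj: "u = x \<or> w = x \<or> u = y"
  then have "w \<noteq> y" using assms(1) by (auto dest: simple_graph_edge_neq)
  moreover have "dist_le_2 E w y"
    using adj uw xy unfolding dist_le_2_def by (auto simp: insert_commute)
  ultimately show "(case (u, {u, w}) of (u, e) \<Rightarrow> f (other_end u e)) \<noteq>
      (case (x, {x, y}) of (u, e) \<Rightarrow> f (other_end u e))"
    using assms(2) unfolding square_coloring_def by auto
qed

lemma kp_incidence_coloring_other_end:
  assumes "simple_graph V E" "square_coloring E f"
  shows "kp_incidence_coloring V E (card (f ` V)) 1 (\<lambda>(u, e). f (other_end u e))"
  unfolding kp_incidence_coloring_def
proof (intro conjI ballI)
  show "incidence_coloring E (\<lambda>(u, e). f (other_end u e))"
    using incidence_coloring_other_end[OF assms] .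
  have "(\<lambda>(u, e). f (other_end u e)) ` incidences E \<subseteq> f ` V"
    by (auto elim!: incidencesE[OF assms(1)] dest: simple_graph_edge_subset[OF assms(1)])
  then show "card ((\<lambda>(u, e). f (other_end u e)) ` incidences E) \<le> card (f ` V)"
    using assms(1) unfolding simple_graph_def by (simp add: card_mono)
  fix v
  have "S1 E (\<lambda>(u, e). f (other_end u e)) v \<subseteq> {f v}"
    unfolding S1_def by auto
  then show "card (S1 E (\<lambda>(u, e). f (other_end u e)) v) \<le> 1"
    using card_mono[of "{f v}"] by fastforce
qed

text \<open>The choice of \<open>u\<close> is arbitrary; it only matters where \<open>S1 E c v\<close> is a singleton.\<close>

definition in_color :: "'a set set \<Rightarrow> ('a \<times> 'a set \<Rightarrow> nat) \<Rightarrow> 'a \<Rightarrow> nat" where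
  "in_color E c v = (let u = SOME u. {u, v} \<in> E in c (u, {u, v}))"

lemma in_color_mem: "{u, v} \<in> E \<Longrightarrow> in_color E c v \<in> c ` incidences E"
  unfolding in_color_def Let_def by (rule imageI, rule incidence_memI, rule someI)

lemma in_color_eq:
  assumes "simple_graph V E" "card (S1 E c v) \<le> 1" "{u, v} \<in> E"
  shows "in_color E c v = c (u, {u, v})"
proof -
  have "finite (S1 E c v)"
    using finite_subset[OF S1_subset_colors finite_imageI[OF finite_incidences[OF assms(1)]]] .
  moreover have "in_color E c v \<in> S1 E c v" "c (u, {u, v}) \<in> S1 E c v"
    using someI[of "\<lambda>u. {u, v} \<in> E", OF assms(3)] assms(3)
    unfolding in_color_def Let_def S1_def by blast+
  ultimately show ?thesis using assms(2) by (auto simp: card_le_Suc0_iff_eq)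
qed

lemma square_coloring_in_color:
  assumes "simple_graph V E" "incidence_coloring E c" "\<forall>v\<in>V. card (S1 E c v) \<le> 1"
  shows "square_coloring E (in_color E c)"
  unfolding square_coloring_def
proof (intro allI impI)
  fix w y assume wy: "w \<noteq> y \<and> dist_le_2 E w y"
  have in_color: "in_color E c v = c (u, {u, v})" if "{u, v} \<in> E" for u v
    using in_color_eq[OF assms(1) _ that] assms(3) simple_graph_edge_subset[OF assms(1) that]
    by blast
  show "in_color E c w \<noteq> in_color E c y"
  proof (cases "{w, y} \<in> E")
    case True
    then have yw: "{y, w} \<in> E" by (simp add: insert_commute)
    have "c (y, {y, w}) \<noteq> c (w, {w, y})"
      using incidence_coloring_neq[OF assms(2,1) yw True] wy by simp
    with True yw show ?thesis by (simp add: in_color)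
  next
    case False
    then obtain u where "{u, w} \<in> E" "{u, y} \<in> E" using wy unfolding dist_le_2_def by blast
    moreover from this have "c (u, {u, w}) \<noteq> c (u, {u, y})"
      using incidence_coloring_neq[OF assms(2,1)] wy by simp
    ultimately show ?thesis by (simp add: in_color)
  qed
qed

lemma card_le_of_kp_incidence_coloring_1:
  assumes "simple_graph V E" "kp_incidence_coloring V E k 1 c"
    and "\<forall>w\<in>C. \<forall>y\<in>C. dist_le_2 E w y"
  shows "card C \<le> k"
proof -
  have c: "incidence_coloring E c" "card (c ` incidences E) \<le> k" "\<forall>v\<in>V. card (S1 E c v) \<le> 1"
    using assms(2) unfolding kp_incidence_coloring_def by simp_all
  have square: "square_coloring E (in_color E c)"
    using square_coloring_in_color[OF assms(1) c(1,3)] .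
  have "inj_on (in_color E c) C"
  proof (rule inj_onI, rule ccontr)
    fix w y assume "w \<in> C" "y \<in> C" "in_color E c w = in_color E c y" "w \<noteq> y"
    moreover from \<open>w \<in> C\<close> \<open>y \<in> C\<close> have "dist_le_2 E w y" using assms(3) by blast
    ultimately show False using square unfolding square_coloring_def by blast
  qed
  moreover have "in_color E c ` C \<subseteq> c ` incidences E"
  proof (rule image_subsetI)
    fix w assume "w \<in> C"
    then obtain u where "{u, w} \<in> E" using assms(3) unfolding dist_le_2_def by blast
    then show "in_color E c w \<in> c ` incidences E" by (rule in_color_mem)
  qed
  ultimately have "card C \<le> card (c ` incidences E)"
    using card_inj_on_le finite_imageI[OF finite_incidences[OF assms(1)]] by metis
  with c(2) show ?thesis by linarith
qed

lemma card_neighbours_less_colors: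
  assumes "simple_graph V E" "incidence_coloring E c" "{v, u\<^sub>0} \<in> E"
  shows "card {u. {v, u} \<in> E} < card (c ` incidences E)"
proof -
  let ?N = "{u. {v, u} \<in> E}" and ?out = "\<lambda>u. c (v, {v, u})" and ?in = "c (u\<^sub>0, {u\<^sub>0, v})"
  have e0: "{u\<^sub>0, v} \<in> E" "u\<^sub>0 \<noteq> v"
    using assms(3) simple_graph_edge_neq[OF assms(1)] by (auto simp: insert_commute)
  have "inj_on ?out ?N"
  proof (rule inj_onI, rule ccontr)
    fix x y assume "x \<in> ?N" "y \<in> ?N" "?out x = ?out y" "x \<noteq> y"
    with incidence_coloring_neq[OF assms(2,1), of v x v y] show False by simp
  qed
  moreover have "?in \<notin> ?out ` ?N"
  proof
    assume "?in \<in> ?out ` ?N"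
    then obtain u where "{v, u} \<in> E" "?in = c (v, {v, u})" by blast
    with e0 show False using incidence_coloring_neq[OF assms(2,1), of u\<^sub>0 v v u] by simp
  qed
  moreover have sub: "insert ?in (?out ` ?N) \<subseteq> c ` incidences E"
    using e0 by auto
  moreover have fin: "finite (c ` incidences E)"
    using finite_incidences[OF assms(1)] by simp
  ultimately have "card (insert ?in (?out ` ?N)) = Suc (card ?N)"
    by (simp add: card_image finite_subset[OF _ fin])
  moreover have "card (insert ?in (?out ` ?N)) \<le> card (c ` incidences E)"
    using card_mono[OF fin sub] .
  ultimately show ?thesis by simp
qed

lemma chi_i_eqI:
  assumes "incidence_coloring E c" "card (c ` incidences E) \<le> k"
    and "\<And>c. incidence_coloring E c \<Longrightarrow> k \<le> card (c ` incidences E)"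
  shows "chi_i E = k"
  unfolding chi_i_def by (rule Least_equality) (use assms in \<open>blast intro: order_trans\<close>)+

lemma chi_ip_eqI:
  assumes "kp_incidence_coloring V E k p c"
    and "\<And>k' c. kp_incidence_coloring V E k' p c \<Longrightarrow> k \<le> k'"
  shows "chi_ip V E p = k"
  unfolding chi_ip_def by (rule Least_equality) (use assms in blast)+

lemma chi_ip_1_eq_card_square_clique:
  assumes "simple_graph V E" "square_coloring E f" "\<forall>w\<in>C. \<forall>y\<in>C. dist_le_2 E w y"
    and "card (f ` V) = card C"
  shows "chi_ip V E 1 = card C"
  using kp_incidence_coloring_other_end[OF assms(1,2)] card_le_of_kp_incidence_coloring_1[OF assms(1) _ assms(3)]
  by (intro chi_ip_eqI) (auto simp: assms(4))

lemma H_E_eq: "H_E = {{0, 1}, {1, 2}, {2, 3}, {3, 4}, {4, 0}, {0, 5}}"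
proof -
  have "{i :: nat. i < 5} = {0, 1, 2, 3, 4}" by auto
  moreover have "{{i, (i + 1) mod 5} | i. i < (5::nat)} = (\<lambda>i. {i, (i + 1) mod 5}) ` {i. i < 5}"
    by blast
  ultimately show ?thesis unfolding H_E_def by (simp add: insert_commute numeral_2_eq_2)
qed

lemma simple_graph_H: "simple_graph H_V H_E"
  unfolding simple_graph_def H_E_eq H_V_def by auto

lemma H_neighbours_0: "{u. {0, u} \<in> H_E} = {1, 4, 5}"
  unfolding H_E_eq by (auto simp: doubleton_eq_iff)

definition H_arcs :: "(nat \<times> nat) set" where
  "H_arcs = {(0, 1), (1, 0), (1, 2), (2, 1), (2, 3), (3, 2), (3, 4), (4, 3), (4, 0), (0, 4), (0, 5), (5, 0)}"

lemma H_edge_iff: "{u, w} \<in> H_E \<longleftrightarrow> (u, w) \<in> H_arcs"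
  unfolding H_E_eq H_arcs_def by (auto simp: doubleton_eq_iff)

text \<open>An entry \<open>((u, w), k)\<close> gives the incidence \<open>(u, uw)\<close> colour \<open>k\<close>.\<close>

definition H_coloring :: "nat \<times> nat set \<Rightarrow> nat" where
  "H_coloring = (\<lambda>(u, e). the (map_of
     [((0, 1), 0), ((1, 0), 1), ((1, 2), 2), ((2, 1), 0), ((2, 3), 1), ((3, 2), 2),
      ((3, 4), 0), ((4, 3), 3), ((4, 0), 1), ((0, 4), 2), ((0, 5), 3), ((5, 0), 1)]
     (u, other_end u e)))"

lemma incidence_coloring_H: "incidence_coloring H_E H_coloring"
proof (rule incidence_coloringI[OF simple_graph_H])
  have all: "\<forall>(u, w)\<in>H_arcs. \<forall>(x, y)\<in>H_arcs. (u, w) \<noteq> (x, y) \<longrightarrow> u = x \<or> w = x \<or> u = y \<longrightarrow>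
      H_coloring (u, {u, w}) \<noteq> H_coloring (x, {x, y})"
    by (simp add: H_arcs_def H_coloring_def)
  fix u w x y
  assume edges: "{u, w} \<in> H_E" "{x, y} \<in> H_E"
    and adj: "(u, w) \<noteq> (x, y)" "u = x \<or> w = x \<or> u = y"
  from edges have "(u, w) \<in> H_arcs" "(x, y) \<in> H_arcs" unfolding H_edge_iff .
  with all have "case (x, y) of (x, y) \<Rightarrow> (u, w) \<noteq> (x, y) \<longrightarrow> u = x \<or> w = x \<or> u = y \<longrightarrow>
      H_coloring (u, {u, w}) \<noteq> H_coloring (x, {x, y})"
    by (metis (no_types, lifting) case_prodD)
  with adj show "H_coloring (u, {u, w}) \<noteq> H_coloring (x, {x, y})" unfolding prod.case by blast
qed

lemma H_V_eq: "H_V = {0, 1, 2, 3, 4, 5}"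
  unfolding H_V_def by auto

lemma kp_incidence_coloring_H: "kp_incidence_coloring H_V H_E 4 2 H_coloring"
  unfolding kp_incidence_coloring_def
proof (intro conjI ballI)
  show "incidence_coloring H_E H_coloring" by (rule incidence_coloring_H)
  have "\<forall>(u, w)\<in>H_arcs. H_coloring (u, {u, w}) \<in> {0..3}"
    by (simp add: H_arcs_def H_coloring_def)
  then have "H_coloring ` incidences H_E \<subseteq> {0..3}"
    by (auto elim!: incidencesE[OF simple_graph_H] simp: H_edge_iff)
  then show "card (H_coloring ` incidences H_E) \<le> 4"
    using card_mono[of "{0..3::nat}"] by fastforce
  fix v assume "v \<in> H_V"
  then show "card (S1 H_E H_coloring v) \<le> 2"
    unfolding H_V_eq
    by (elim insertE emptyE)
       (simp_all add: S1_eq_image H_E_eq doubleton_eq_iff Collect_disj_eq H_coloring_def)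
qed

lemma square_coloring_H: "square_coloring H_E (\<lambda>w. if w = 5 then 2 else w)"
proof -
  have "\<not> dist_le_2 H_E 2 5"
    unfolding dist_le_2_def H_E_eq by (auto simp: doubleton_eq_iff)
  then show ?thesis
    unfolding square_coloring_def by (auto simp: dist_le_2_commute split: if_splits)
qed

lemma dist_le_2_H_cycle: "\<forall>w\<in>{0..4}. \<forall>y\<in>{0..4}. dist_le_2 H_E w y"
proof -
  have cycle: "{0..4} = {0, 1, 2, 3, 4 :: nat}" by auto
  show ?thesis unfolding cycle dist_le_2_def H_edge_iff H_arcs_def by auto
qed

lemma card_colors_H_ge_4:
  assumes "incidence_coloring H_E c"
  shows "4 \<le> card (c ` incidences H_E)"
proof -
  have "{0, 1} \<in> H_E" by (simp add: H_edge_iff H_arcs_def)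
  from card_neighbours_less_colors[OF simple_graph_H assms this] show ?thesis
    by (simp add: H_neighbours_0)
qed

lemma K_E_memI: "i < n \<Longrightarrow> n \<le> y \<Longrightarrow> y < 2 * n \<Longrightarrow> {i, y} \<in> K_E n"
  unfolding K_E_def by (rule CollectI, intro exI[of _ i] exI[of _ "y - n"]) auto

lemma simple_graph_K: "simple_graph (K_V n) (K_E n)"
  unfolding simple_graph_def K_V_def K_E_def by auto

lemma dist_le_2_K:
  assumes "n \<ge> 1"
  shows "\<forall>w\<in>K_V n. \<forall>y\<in>K_V n. dist_le_2 (K_E n) w y"
proof (intro ballI)
  fix w y assume "w \<in> K_V n" "y \<in> K_V n"
  then have w: "w < 2 * n" and y: "y < 2 * n" unfolding K_V_def by auto
  consider "w < n" "y < n" | "n \<le> w" "n \<le> y" | "w < n" "n \<le> y" | "n \<le> w" "y < n"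
    by linarith
  then show "dist_le_2 (K_E n) w y"
  proof cases
    case 1
    then have "{n, w} \<in> K_E n" "{n, y} \<in> K_E n"
      using K_E_memI[of w n n] K_E_memI[of y n n] assms by (simp_all add: insert_commute)
    then show ?thesis unfolding dist_le_2_def by blast
  next
    case 2
    then have "{0, w} \<in> K_E n" "{0, y} \<in> K_E n"
      using K_E_memI[of 0 n] assms w y by auto
    then show ?thesis unfolding dist_le_2_def by blast
  next
    case 3
    then show ?thesis using K_E_memI y unfolding dist_le_2_def by blast
  next
    case 4
    then have "{y, w} \<in> K_E n" using K_E_memI w by blast
    then show ?thesis unfolding dist_le_2_def by (simp add: insert_commute)
  qed
qed

lemma chi_ip_K: "n \<ge> 1 \<Longrightarrow> chi_ip (K_V n) (K_E n) 1 = 2 * n"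
  using chi_ip_1_eq_card_square_clique[OF simple_graph_K _ dist_le_2_K, of n id]
  by (simp add: square_coloring_def K_V_def)

theorem mainTheorem13:
  shows "(chi_i H_E = 4 \<and> chi_ip H_V H_E 2 = 4 \<and> chi_ip H_V H_E 1 = 5) \<and>
         (\<forall>n::nat. n \<ge> 1 \<longrightarrow> chi_ip (K_V n) (K_E n) 1 = 2 * n)"
proof (intro conjI allI impI)
  have H_coloring: "incidence_coloring H_E H_coloring" "card (H_coloring ` incidences H_E) \<le> 4"
    using kp_incidence_coloring_H unfolding kp_incidence_coloring_def by auto
  show "chi_i H_E = 4"
    using chi_i_eqI[OF H_coloring card_colors_H_ge_4] .
  show "chi_ip H_V H_E 2 = 4"
    using chi_ip_eqI[OF kp_incidence_coloring_H] card_colors_H_ge_4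
    unfolding kp_incidence_coloring_def by fastforce
  have "(\<lambda>w. if w = 5 then 2 else w) ` H_V = {0..4::nat}"
    by (auto simp: H_V_eq)
  then show "chi_ip H_V H_E 1 = 5"
    using chi_ip_1_eq_card_square_clique[OF simple_graph_H square_coloring_H dist_le_2_H_cycle]
    by simp
  show "chi_ip (K_V n) (K_E n) 1 = 2 * n" if "n \<ge> 1" for n
    using chi_ip_K[OF that] .
qed

end
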